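(* Suppose that for every $m'\in\mathbb{N}$ there are sequences $(Z_{j,m'})_{j}$ of $\mathcal{C}^\infty$ maps $\mathbb{T}^d\to Gl(n,\mathbb{C})$ and $(F_{j,m'})_j$ of $\mathcal{C}^\infty$ maps $\mathbb{T}^d\to gl(n,\mathbb{C})$ such that $\|Z_{j,m'}^{\pm1}\|^{m'}_{\mathcal{C}^{m'}}\|F_{j,m'}\|_{\mathcal{C}^{m'}}\to0$ as $j\to\infty$. Then there exist sequences $(\tilde Z_j)$ and $(\tilde F_j)$, extracted from these with the same indices (i.e. $\tilde Z_j=Z_{a_j,b_j}$ and $\tilde F_j=F_{a_j,b_j}$ for some indices $(a_j,b_j)$), such that for all $m,r\in\mathbb{N}$, $\|\tilde Z_j^{\pm1}\|^m_{\mathcal{C}^r}\|\tilde F_j\|_{\mathcal{C}^r}\to0$ as $j\to\infty$.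
   Context: $\mathbb{T}^d=\mathbb{R}^d/\mathbb{Z}^d$; $\|\cdot\|$ operator norm, $\|A\|_{\mathcal{C}^0}=\sup_\theta\|A(\theta)\|$, $\|A\|_{\mathcal{C}^r}=\max_{|\alpha|\le r}\|\partial^\alpha A\|_{\mathcal{C}^0}$; conditions with $\pm1$ are required for both the maps and their pointwise inverses. *)

theory Defs
  imports "HOL-Analysis.Analysis"
begin

text \<open>Maps on the torus T^d = R^d / Z^d are represented as Z^d-periodic maps on R^d
  (with R^d = real^'d).\<close>
definition torus_map :: "(real^'d \<Rightarrow> 'b) \<Rightarrow> bool" where
  "torus_map f \<longleftrightarrow> (\<forall>x i. f (x + axis i 1) = f x)"

definition pdiff :: "'d \<Rightarrow> (real^'d \<Rightarrow> 'b::real_normed_vector) \<Rightarrow> real^'d \<Rightarrow> 'b" where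
  "pdiff i f = (\<lambda>x. frechet_derivative f (at x) (axis i 1))"

text \<open>Iterated partial derivative along a list of directions (a multi-index alpha
  with |alpha| = length of the list).\<close>
fun iter_pdiff :: "'d list \<Rightarrow> (real^'d \<Rightarrow> 'b::real_normed_vector) \<Rightarrow> real^'d \<Rightarrow> 'b" where
  "iter_pdiff [] f = f"
| "iter_pdiff (i # is) f = pdiff i (iter_pdiff is f)"

definition smooth_map :: "(real^'d \<Rightarrow> 'b::real_normed_vector) \<Rightarrow> bool" where
  "smooth_map f \<longleftrightarrow> (\<forall>is x. iter_pdiff is f differentiable (at x))"

definition mat_opnorm :: "complex^'n^'n \<Rightarrow> real" where
  "mat_opnorm A = onorm (\<lambda>v. A *v v)"

definition C0_norm :: "(real^'d \<Rightarrow> complex^'n^'n) \<Rightarrow> real" where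
  "C0_norm A = (SUP x. mat_opnorm (A x))"

definition Cr_norm :: "nat \<Rightarrow> (real^'d \<Rightarrow> complex^'n^'n) \<Rightarrow> real" where
  "Cr_norm r A = (SUP is \<in> {is :: 'd list. length is \<le> r}. C0_norm (iter_pdiff is A))"

definition pinv :: "(real^'d \<Rightarrow> complex^'n^'n) \<Rightarrow> real^'d \<Rightarrow> complex^'n^'n" where
  "pinv A = (\<lambda>x. matrix_inv (A x))"

end

theory Submission
  imports Defs
begin

text \<open>Choose for every k an index a k such that, with Z = Z (a k) k, F = F (a k) k and
  |.|_k the C^k norm, |Z|_k^k |F|_k + |Z^-1|_k^k |F|_k < 1/(k+1); take b k = k.
  For k >= max m r the C^r norms are bounded by the C^k norms, and since
  |Z x| |Z x^-1| >= 1, one of |Z|_k, |Z^-1|_k is at least 1. Hence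
  |Z^(+-1)|_r^m |F|_r <= (max 1 |Z^(+-1)|_k)^k |F|_k is dominated by the sum above.
  The norms are genuine suprema (not junk values of a real SUP over an unbounded set)
  because continuous periodic maps, and pointwise inverses of invertible ones, are bounded.\<close>

lemma bounded_bilinear_matrix_vector_mult:
  "bounded_bilinear (\<lambda>(A::'a::{euclidean_space,real_algebra_1}^'n^'m) v. A *v v)"
proof -
  have "bilinear (\<lambda>(A::'a^'n^'m) v. A *v v)"
    unfolding bilinear_def
    by (auto intro!: linearI simp: matrix_vector_mult_add_rdistrib matrix_vector_right_distrib
        vec_eq_iff matrix_vector_mult_def scaleR_sum_right distrib_right sum.distrib)
  then show ?thesis by (simp add: bilinear_conv_bounded_bilinear)
qed

lemma mat_opnorm_nonneg: "0 \<le> mat_opnorm A"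
  unfolding mat_opnorm_def by (rule onorm_pos_le) simp

lemma mat_opnorm_le_norm: "\<exists>K\<ge>0. \<forall>A::complex^'n^'n. mat_opnorm A \<le> K * norm A"
proof -
  obtain K where "K \<ge> 0" and K: "\<And>(A::complex^'n^'n) v. norm (A *v v) \<le> norm A * norm v * K"
    using bounded_bilinear.nonneg_bounded[OF bounded_bilinear_matrix_vector_mult] by blast
  have "mat_opnorm A \<le> K * norm A" for A :: "complex^'n^'n"
    unfolding mat_opnorm_def by (rule onorm_le) (use K in \<open>simp add: ac_simps\<close>)
  with \<open>K \<ge> 0\<close> show ?thesis by blast
qed

lemma matrix_inv_right:
  assumes "invertible (A::'a::semiring_1^'n^'m)"
  shows "A ** matrix_inv A = mat 1"
  using someI_ex[OF assms[unfolded invertible_def]] by (simp add: matrix_inv_def)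

lemma one_le_mat_opnorm_mult_inv:
  assumes "invertible (A::complex^'n^'n)"
  shows "1 \<le> mat_opnorm A * mat_opnorm (matrix_inv A)"
proof -
  have "(\<lambda>v. v) = (\<lambda>v. A *v v) \<circ> (\<lambda>v. matrix_inv A *v v)"
    by (simp add: o_def matrix_vector_mul_assoc matrix_inv_right[OF assms])
  then have "onorm (\<lambda>v::complex^'n. v) \<le> mat_opnorm A * mat_opnorm (matrix_inv A)"
    unfolding mat_opnorm_def by (metis onorm_compose matrix_vector_mul_bounded_linear)
  then show ?thesis by (simp add: onorm_id)
qed

lemma matrix_inv_component:
  fixes A :: "'a::field^'n^'n"
  assumes "invertible A"
  shows "matrix_inv A $ k $ l = det (\<chi> i j. if j = k then axis l 1 $ i else A $ i $ j) / det A"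
proof -
  let ?x = "matrix_inv A *v axis l 1"
  have "A *v ?x = axis l 1"
    by (simp add: matrix_vector_mul_assoc matrix_inv_right[OF assms])
  note cramer_lemma[of k A ?x, unfolded this]
  moreover have "?x $ k = matrix_inv A $ k $ l"
    by (simp add: matrix_vector_mult_def axis_def if_distrib cong: if_cong)
  ultimately show ?thesis
    using invertible_det_nz[of A] assms by (simp add: field_simps)
qed

lemma continuous_on_matrix_inv:
  fixes M :: "'a::topological_space \<Rightarrow> 'b::real_normed_field^'n^'n"
  assumes "continuous_on S M" "\<And>x. x \<in> S \<Longrightarrow> invertible (M x)"
  shows "continuous_on S (\<lambda>x. matrix_inv (M x))"
proof -
  have [continuous_intros]: "continuous_on S (\<lambda>x. if b then c else M x $ i $ j)" for b c i j
    using assms(1) by (cases b) (auto intro: continuous_intros continuous_on_component)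
  have "continuous_on S (\<lambda>x. \<chi> k l. det (\<chi> i j. if j = k then axis l 1 $ i else M x $ i $ j) / det (M x))"
    using assms invertible_det_nz unfolding det_def by (intro continuous_intros) auto
  moreover have "matrix_inv (M x) = (\<chi> k l. det (\<chi> i j. if j = k then axis l 1 $ i else M x $ i $ j) / det (M x))"
    if "x \<in> S" for x
    using assms(2)[OF that] by (simp add: vec_eq_iff matrix_inv_component)
  ultimately show ?thesis
    using continuous_on_cong by fastforce
qed

lemma torus_map_shift_axis:
  assumes "torus_map f"
  shows "f (x + of_int k *\<^sub>R axis i 1) = f x"
proof (induction k arbitrary: x rule: int_induct[where k = 0])
  case (step1 k)
  have "x + of_int (k + 1) *\<^sub>R axis i 1 = (x + of_int k *\<^sub>R axis i 1) + axis i 1"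
    by (simp add: algebra_simps)
  with step1 assms show ?case unfolding torus_map_def by metis
next
  case (step2 k)
  have "x + of_int k *\<^sub>R axis i 1 = (x + of_int (k - 1) *\<^sub>R axis i 1) + axis i 1"
    by (simp add: algebra_simps)
  with step2 assms show ?case unfolding torus_map_def by metis
qed simp

lemma torus_map_shift_lattice:
  assumes "torus_map f"
  shows "f (x + (\<Sum>i\<in>S. of_int (k i) *\<^sub>R axis i 1)) = f x"
proof (induction S arbitrary: x rule: infinite_finite_induct)
  case (insert i S)
  then show ?case
    using torus_map_shift_axis[OF assms] by (simp add: add.assoc[symmetric])
qed simp_all

lemma bounded_range_torus_map:
  fixes f :: "real^'d \<Rightarrow> 'b::real_normed_vector"
  assumes "torus_map f" "continuous_on UNIV f"
  shows "bounded (range f)"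
proof -
  let ?Q = "cbox (0::real^'d) 1"
  have "range f \<subseteq> f ` ?Q"
  proof
    fix y assume "y \<in> range f"
    then obtain x where "y = f x" by blast
    define n where "n = (\<Sum>i\<in>UNIV. of_int \<lfloor>x $ i\<rfloor> *\<^sub>R axis i (1::real))"
    have "n $ i = of_int \<lfloor>x $ i\<rfloor>" for i
      by (simp add: n_def axis_def if_distrib cong: if_cong)
    moreover have "0 \<le> x $ i - of_int \<lfloor>x $ i\<rfloor> \<and> x $ i - of_int \<lfloor>x $ i\<rfloor> \<le> 1" for i
      by linarith
    ultimately have "x - n \<in> ?Q"
      by (simp add: mem_box_cart)
    moreover have "f (x - n + n) = f (x - n)"
      unfolding n_def by (rule torus_map_shift_lattice[OF assms(1)])
    ultimately show "y \<in> f ` ?Q" using \<open>y = f x\<close> by auto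
  qed
  moreover have "compact (f ` ?Q)"
    by (intro compact_continuous_image continuous_on_subset[OF assms(2)]) auto
  ultimately show ?thesis
    using bounded_subset compact_imp_bounded by blast
qed

lemma bounded_range_pinv_torus_map:
  assumes "torus_map A" "continuous_on UNIV A" "\<And>x. invertible (A x)"
  shows "bounded (range (pinv A))"
  using assms unfolding pinv_def
  by (intro bounded_range_torus_map continuous_on_matrix_inv) (auto simp: torus_map_def)

lemma smooth_map_imp_continuous_on: "smooth_map f \<Longrightarrow> continuous_on S f"
  unfolding smooth_map_def
  by (metis iter_pdiff.simps(1) differentiable_imp_continuous_within continuous_at_imp_continuous_on)

lemma finite_lists_length_le_UNIV: "finite {is :: 'a::finite list. length is \<le> r}"
  using finite_lists_length_le[of "UNIV :: 'a set" r] by simp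

lemma Cr_norm_mono:
  assumes "r \<le> s"
  shows "Cr_norm r A \<le> Cr_norm s A"
  unfolding Cr_norm_def
  using assms by (intro cSUP_subset_mono bdd_above_finite finite_imageI finite_lists_length_le_UNIV)
    (auto intro: exI[of _ "[]"])

lemma C0_norm_le_Cr_norm: "C0_norm A \<le> Cr_norm r A"
  using cSUP_upper[OF _ bdd_above_finite[OF finite_imageI[OF finite_lists_length_le_UNIV]],
      of "[]" r "\<lambda>is. C0_norm (iter_pdiff is A)"]
  by (simp add: Cr_norm_def)

lemma mat_opnorm_le_C0_norm:
  fixes A :: "real^'d \<Rightarrow> complex^'n^'n"
  assumes "bounded (range A)"
  shows "mat_opnorm (A x) \<le> C0_norm A"
proof -
  obtain K where "K \<ge> 0" and K: "\<And>M :: complex^'n^'n. mat_opnorm M \<le> K * norm M"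
    using mat_opnorm_le_norm by blast
  obtain B where B: "\<And>y. norm (A y) \<le> B"
    using assms by (auto simp: bounded_iff)
  have "mat_opnorm (A y) \<le> K * B" for y
    using K[of "A y"] mult_left_mono[OF B[of y] \<open>K \<ge> 0\<close>] by linarith
  then show ?thesis
    unfolding C0_norm_def by (intro cSUP_upper bdd_aboveI2) auto
qed

lemma
  assumes "bounded (range A)"
  shows mat_opnorm_le_Cr_norm: "mat_opnorm (A x) \<le> Cr_norm r A"
    and Cr_norm_nonneg: "0 \<le> Cr_norm r A"
  using mat_opnorm_le_C0_norm[OF assms, of x] C0_norm_le_Cr_norm[of A r] mat_opnorm_nonneg[of "A x"]
  by linarith+

lemma power_le_power_add_power:
  fixes x X Y :: real
  assumes "0 \<le> x" "x \<le> X" "0 \<le> Y" "1 \<le> X \<or> 1 \<le> Y" "m \<le> k"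
  shows "x ^ m \<le> X ^ k + Y ^ k"
proof -
  have "x ^ m \<le> max 1 X ^ m"
    using assms(1,2) by (intro power_mono) auto
  also have "\<dots> \<le> max 1 X ^ k"
    using assms(5) by (intro power_increasing) auto
  also have "\<dots> \<le> X ^ k + Y ^ k"
  proof (cases "1 \<le> X")
    case False
    then have "1 \<le> Y ^ k" using assms(4) by (simp add: one_le_power)
    moreover have "0 \<le> X ^ k" using assms(1,2) by simp
    ultimately show ?thesis using False by (simp add: max_def)
  qed (use assms(3) in simp)
  finally show ?thesis .
qed

lemma one_le_Cr_norm_or_Cr_norm_pinv:
  fixes A :: "real^'d \<Rightarrow> complex^'n^'n"
  assumes "bounded (range A)" "bounded (range (pinv A))" "invertible (A x)"
  shows "1 \<le> Cr_norm k A \<or> 1 \<le> Cr_norm k (pinv A)"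
proof -
  have "1 \<le> mat_opnorm (A x) * mat_opnorm (pinv A x)"
    using one_le_mat_opnorm_mult_inv[OF assms(3)] by (simp add: pinv_def)
  also have "\<dots> \<le> Cr_norm k A * Cr_norm k (pinv A)"
    using assms(1,2) by (intro mult_mono mat_opnorm_le_Cr_norm mat_opnorm_nonneg Cr_norm_nonneg)
  finally show ?thesis
    using Cr_norm_nonneg[OF assms(1), of k] mult_left_le[of "Cr_norm k (pinv A)" "Cr_norm k A"]
    by linarith
qed

lemma Cr_norm_power_mult_le:
  fixes A B F :: "real^'d \<Rightarrow> complex^'n^'n"
  assumes "bounded (range A)" "bounded (range B)" "bounded (range F)"
    and "1 \<le> Cr_norm k A \<or> 1 \<le> Cr_norm k B" "r \<le> k" "m \<le> k"
  shows "Cr_norm r A ^ m * Cr_norm r F \<le> Cr_norm k A ^ k * Cr_norm k F + Cr_norm k B ^ k * Cr_norm k F"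
proof -
  have "Cr_norm r A ^ m \<le> Cr_norm k A ^ k + Cr_norm k B ^ k"
    using assms by (intro power_le_power_add_power Cr_norm_nonneg Cr_norm_mono)
  then have "Cr_norm r A ^ m * Cr_norm r F \<le> (Cr_norm k A ^ k + Cr_norm k B ^ k) * Cr_norm k F"
    using assms(1,2,3,5) by (intro mult_mono Cr_norm_mono Cr_norm_nonneg add_nonneg_nonneg zero_le_power)
  then show ?thesis by (simp add: distrib_right)
qed

lemma LIMSEQ_diagonal_zero:
  fixes u :: "nat \<Rightarrow> nat \<Rightarrow> 'a::real_normed_vector"
  assumes "\<And>k. u k \<longlonglongrightarrow> 0"
  obtains a where "(\<lambda>k. u k (a k)) \<longlonglongrightarrow> 0"
proof -
  have "\<exists>j. norm (u k j) < inverse (real (Suc k))" for k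
    using LIMSEQ_D[OF assms[of k], of "inverse (real (Suc k))"] by auto
  then obtain a where "\<And>k. norm (u k (a k)) < inverse (real (Suc k))"
    by metis
  then have "(\<lambda>k. u k (a k)) \<longlonglongrightarrow> 0"
    by (intro Lim_null_comparison[OF _ LIMSEQ_inverse_real_of_nat] always_eventually allI less_imp_le)
  then show ?thesis ..
qed

theorem lemma24:
  fixes Z F :: "nat \<Rightarrow> nat \<Rightarrow> real^'d \<Rightarrow> complex^'n^'n"
  assumes Z_GL: "\<forall>j m'. torus_map (Z j m') \<and> smooth_map (Z j m') \<and> (\<forall>x. invertible (Z j m' x))"
    and F_gl: "\<forall>j m'. torus_map (F j m') \<and> smooth_map (F j m')"
    and Z_lim: "\<forall>m'. (\<lambda>j. Cr_norm m' (Z j m') ^ m' * Cr_norm m' (F j m')) \<longlonglongrightarrow> 0"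
    and Zinv_lim: "\<forall>m'. (\<lambda>j. Cr_norm m' (pinv (Z j m')) ^ m' * Cr_norm m' (F j m')) \<longlonglongrightarrow> 0"
  shows "\<exists>a b :: nat \<Rightarrow> nat. \<forall>m r.
           (\<lambda>j. Cr_norm r (Z (a j) (b j)) ^ m * Cr_norm r (F (a j) (b j))) \<longlonglongrightarrow> 0 \<and>
           (\<lambda>j. Cr_norm r (pinv (Z (a j) (b j))) ^ m * Cr_norm r (F (a j) (b j))) \<longlonglongrightarrow> 0"
proof -
  have bdd: "bounded (range (Z j k))" "bounded (range (pinv (Z j k)))" "bounded (range (F j k))" for j k
    using Z_GL F_gl
    by (meson bounded_range_torus_map bounded_range_pinv_torus_map smooth_map_imp_continuous_on)+
  have one: "1 \<le> Cr_norm r (Z j k) \<or> 1 \<le> Cr_norm r (pinv (Z j k))" for r j k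
    using Z_GL one_le_Cr_norm_or_Cr_norm_pinv[OF bdd(1,2)] by blast
  define u where "u k j = Cr_norm k (Z j k) ^ k * Cr_norm k (F j k)
    + Cr_norm k (pinv (Z j k)) ^ k * Cr_norm k (F j k)" for k j
  have "u k \<longlonglongrightarrow> 0" for k
    unfolding u_def using tendsto_add[OF Z_lim[rule_format] Zinv_lim[rule_format]] by simp
  then obtain a where a: "(\<lambda>k. u k (a k)) \<longlonglongrightarrow> 0"
    using LIMSEQ_diagonal_zero by blast
  have "(\<lambda>k. Cr_norm r (A k) ^ m * Cr_norm r (F (a k) k)) \<longlonglongrightarrow> 0"
    if A: "A = (\<lambda>k. Z (a k) k) \<or> A = (\<lambda>k. pinv (Z (a k) k))" for A m r
  proof (rule Lim_null_comparison[OF eventually_sequentiallyI a])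
    fix k assume "max m r \<le> k"
    then show "norm (Cr_norm r (A k) ^ m * Cr_norm r (F (a k) k)) \<le> u k (a k)"
      using A Cr_norm_power_mult_le[OF bdd(1,2,3) one] Cr_norm_power_mult_le[OF bdd(2,1,3)] one
        Cr_norm_nonneg[OF bdd(1)] Cr_norm_nonneg[OF bdd(2)] Cr_norm_nonneg[OF bdd(3)]
      by (auto simp: u_def add.commute disj_commute)
  qed
  then show ?thesis
    by (rule_tac exI[of _ a], rule_tac exI[of _ "\<lambda>k. k"]) simp
qed

end
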